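(* Let $\mathcal{S}_1,\dots,\mathcal{S}_L$ be finitely many finite subsets of $\mathbb{C}$, each having non-zero coordinate product distance. For $\theta\in[0,2\pi]$ and $x=(x^1,\dots,x^6)\in\mathbb{C}^6$, let $X'_\theta(x)$ be the $3\times 4$ matrix $$X'_\theta(x)=\begin{bmatrix} x^{1R}+jx^{3I} & -x^{2R}+jx^{4I} & e^{j\theta}(x^{5R}+jx^{6I}) & e^{j\theta}(-x^{3R}+jx^{1I})\\ x^{2R}+jx^{4I} & x^{1R}-jx^{3I} & e^{j\theta}(x^{4R}+jx^{2I}) & e^{j\theta}(x^{5R}-jx^{6I})\\ e^{j\theta}(x^{6R}+jx^{5I}) & e^{j\theta}(-x^{6R}+jx^{5I}) & x^{3R}+jx^{1I} & -x^{4R}+jx^{2I} \end{bmatrix}.$$ Then there exists $\theta\in[0,2\pi]$ such that for every $\ell\in\{1,\dots,L\}$ and every two distinct tuples $x\neq y$ in $\mathcal{S}_\ell^6$, the difference matrix $X'_\theta(x)-X'_\theta(y)$ has rank $3$.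
   Context: For a complex number $a$, $a^R$ and $a^I$ denote its real and imaginary parts, and $j=\sqrt{-1}$. The coordinate product distance (CPD) between two distinct points $u,v$ of a finite set $\mathcal{S}\subset\mathbb{C}$ is $|u^R-v^R|\,|u^I-v^I|$; the CPD of $\mathcal{S}$ is the minimum of this quantity over all pairs of distinct points of $\mathcal{S}$. (So non-zero CPD means any two distinct points differ in both real and imaginary parts.) *)

theory Defs
  imports "HOL-Analysis.Analysis"
begin

text \<open>Non-zero coordinate product distance: every pair of distinct points u, v of S
  has |Re u - Re v| * |Im u - Im v| non-zero (the minimum over the finitely many
  pairs is non-zero).\<close>
definition nonzero_cpd :: "complex set \<Rightarrow> bool" where
  "nonzero_cpd S \<longleftrightarrow>
     (\<forall>u\<in>S. \<forall>v\<in>S. u \<noteq> v \<longrightarrow> \<bar>Re u - Re v\<bar> * \<bar>Im u - Im v\<bar> \<noteq> 0)"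

text \<open>The 3x4 matrix X'_theta(x) for x = (x^1,...,x^6) in C^6.
  Components are indexed by the numeral type 6; the component x^6 is x$6 (= x$0 in type 6).\<close>
definition Xp :: "real \<Rightarrow> complex^6 \<Rightarrow> complex^4^3" where
  "Xp \<theta> x = (let e = exp (\<i> * complex_of_real \<theta>);
      c = (\<lambda>a b. Complex a b) in
     vector [
       vector [c (Re (x$1)) (Im (x$3)), c (- Re (x$2)) (Im (x$4)),
               e * c (Re (x$5)) (Im (x$6)), e * c (- Re (x$3)) (Im (x$1))],
       vector [c (Re (x$2)) (Im (x$4)), c (Re (x$1)) (- Im (x$3)),
               e * c (Re (x$4)) (Im (x$2)), e * c (Re (x$5)) (- Im (x$6))],
       vector [e * c (Re (x$6)) (Im (x$5)), e * c (- Re (x$6)) (Im (x$5)),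
               c (Re (x$3)) (Im (x$1)), c (- Re (x$4)) (Im (x$2))]])"

end

theory Submission imports Defs begin

text \<open>For a set with non-zero coordinate product distance, every coordinate of a difference
  \<open>d = x - y\<close> of tuples over it is either zero or has both real and imaginary part non-zero.
  As \<open>X'\<^sub>\<theta>\<close> is additive, it suffices that \<open>X'\<^sub>\<theta>(d)\<close> has rank 3 for each of the
  finitely many such \<open>d \<noteq> 0\<close>. Some \<open>3 \<times> 3\<close> minor of \<open>X'\<^sub>\<theta>(d)\<close> has the form \<open>a + w k\<close> with
  \<open>w = e\<^sup>2\<^sup>j\<^sup>\<theta>\<close> and \<open>a \<noteq> 0\<close>: if \<open>d\<^sup>1,\<dots>,d\<^sup>4\<close> vanish, the minor on columns 1, 3, 4 is a
  product of three non-zero entries; otherwise columns 1, 2, 3 or 1, 2, 4 give \<open>a\<close> as a non-zero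
  entry times the determinant of the Alamouti block in the upper left corner, which is a positive
  sum of squares. Hence each \<open>d\<close> excludes only finitely many \<open>w\<close>, and as \<open>\<theta> \<mapsto> e\<^sup>2\<^sup>j\<^sup>\<theta>\<close> is
  injective on \<open>[0, \<pi>)\<close> a good \<open>\<theta>\<close> remains.\<close>

lemma exhaust_6:
  fixes x :: 6
  shows "x = 1 \<or> x = 2 \<or> x = 3 \<or> x = 4 \<or> x = 5 \<or> x = 6"
proof (induct x)
  case (of_int z)
  then have "z = 0 \<or> z = 1 \<or> z = 2 \<or> z = 3 \<or> z = 4 \<or> z = 5" by fastforce
  then show ?case by auto
qed

lemma finite_vectors_with_components_in:
  assumes "finite A"
  shows "finite {x :: 'a^'n. \<forall>i. x$i \<in> A}"
proof (rule finite_imageD)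
  have "vec_nth ` {x :: 'a^'n. \<forall>i. x$i \<in> A} \<subseteq> PiE UNIV (\<lambda>_. A)"
    by (auto simp: PiE_def extensional_def)
  then show "finite (vec_nth ` {x :: 'a^'n. \<forall>i. x$i \<in> A})"
    by (rule finite_subset) (simp add: assms finite_PiE)
  show "inj_on vec_nth {x :: 'a^'n. \<forall>i. x$i \<in> A}"
    by (auto simp: inj_on_def vec_eq_iff)
qed

lemma finite_roots_affine:
  fixes a k :: "'a::field"
  assumes "a \<noteq> 0"
  shows "finite {w. a + w * k = 0}"
proof (rule finite_subset)
  show "{w. a + w * k = 0} \<subseteq> {- a / k}"
    using assms by (auto simp: field_simps add_eq_0_iff2)
qed simp

definition det3 :: "'a::comm_ring_1 \<Rightarrow> 'a \<Rightarrow> 'a \<Rightarrow> 'a \<Rightarrow> 'a \<Rightarrow> 'a \<Rightarrow> 'a \<Rightarrow> 'a \<Rightarrow> 'a \<Rightarrow> 'a" where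
  "det3 m11 m12 m13 m21 m22 m23 m31 m32 m33 =
     m11*m22*m33 + m12*m23*m31 + m13*m21*m32 - m13*m22*m31 - m12*m21*m33 - m11*m23*m32"

lemma rank_eq_3_if_rows_independent:
  fixes A :: "'a::field^'n^3"
  assumes indep: "\<And>c1 c2 c3. c1 *s A$1 + c2 *s A$2 + c3 *s A$3 = 0 \<Longrightarrow> c1 = 0 \<and> c2 = 0 \<and> c3 = 0"
  shows "rank A = 3"
proof -
  have rows: "rows A = {A$1, A$2, A$3}"
    unfolding rows_def row_def by (auto simp: vec_lambda_eta) (metis exhaust_3)
  have d12: "A$1 \<noteq> A$2" using indep[of 1 "-1" 0] by auto
  have d13: "A$1 \<noteq> A$3" using indep[of 1 0 "-1"] by auto
  have d23: "A$2 \<noteq> A$3" using indep[of 0 1 "-1"] by auto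
  have "\<not> vec.dependent {A$1, A$2, A$3}"
  proof
    assume "vec.dependent {A$1, A$2, A$3}"
    then obtain u where u: "\<exists>v\<in>{A$1, A$2, A$3}. u v \<noteq> 0"
      "(\<Sum>v\<in>{A$1, A$2, A$3}. u v *s v) = 0"
      by (subst (asm) vec.dependent_finite) auto
    then have "u (A$1) *s A$1 + u (A$2) *s A$2 + u (A$3) *s A$3 = 0"
      using d12 d13 d23 by (simp add: add.assoc)
    from indep[OF this] u(1) show False by auto
  qed
  then have "vec.dim (rows A) = card {A$1, A$2, A$3}"
    unfolding rows by (rule vec.dim_eq_card_independent)
  also have "\<dots> = 3" using d12 d13 d23 by simp
  finally show ?thesis by (simp add: row_rank_def_gen)
qed

lemma det3_nonzero_imp_trivial_solution:
  fixes c1 c2 c3 :: "'a::field"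
  assumes "c1*m11 + c2*m21 + c3*m31 = 0" "c1*m12 + c2*m22 + c3*m32 = 0"
    "c1*m13 + c2*m23 + c3*m33 = 0"
    and "det3 m11 m12 m13 m21 m22 m23 m31 m32 m33 \<noteq> 0"
  shows "c1 = 0 \<and> c2 = 0 \<and> c3 = 0"
proof -
  \<comment> \<open>multiply the system by the adjugate\<close>
  have "c1 * det3 m11 m12 m13 m21 m22 m23 m31 m32 m33 = 0"
       "c2 * det3 m11 m12 m13 m21 m22 m23 m31 m32 m33 = 0"
       "c3 * det3 m11 m12 m13 m21 m22 m23 m31 m32 m33 = 0"
    using assms(1-3) unfolding det3_def by algebra+
  with assms(4) show ?thesis by simp
qed

lemma rank_eq_3_if_minor_nonzero:
  fixes A :: "'a::field^'n^3"
  assumes "det3 (A$1$j1) (A$1$j2) (A$1$j3) (A$2$j1) (A$2$j2) (A$2$j3)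
             (A$3$j1) (A$3$j2) (A$3$j3) \<noteq> 0"
  shows "rank A = 3"
proof (rule rank_eq_3_if_rows_independent)
  fix c1 c2 c3 :: 'a
  assume "c1 *s A$1 + c2 *s A$2 + c3 *s A$3 = 0"
  then have "\<And>j. c1 * A$1$j + c2 * A$2$j + c3 * A$3$j = 0"
    by (simp add: vec_eq_iff)
  from this[of j1] this[of j2] this[of j3] assms show "c1 = 0 \<and> c2 = 0 \<and> c3 = 0"
    by (rule det3_nonzero_imp_trivial_solution)
qed

lemma Xp_components:
  fixes t :: real defines "e \<equiv> exp (\<i> * complex_of_real t)"
  shows
  "Xp t x $1$1 = Complex (Re (x$1)) (Im (x$3))"
  "Xp t x $1$2 = Complex (- Re (x$2)) (Im (x$4))"
  "Xp t x $1$3 = e * Complex (Re (x$5)) (Im (x$6))"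
  "Xp t x $1$4 = e * Complex (- Re (x$3)) (Im (x$1))"
  "Xp t x $2$1 = Complex (Re (x$2)) (Im (x$4))"
  "Xp t x $2$2 = Complex (Re (x$1)) (- Im (x$3))"
  "Xp t x $2$3 = e * Complex (Re (x$4)) (Im (x$2))"
  "Xp t x $2$4 = e * Complex (Re (x$5)) (- Im (x$6))"
  "Xp t x $3$1 = e * Complex (Re (x$6)) (Im (x$5))"
  "Xp t x $3$2 = e * Complex (- Re (x$6)) (Im (x$5))"
  "Xp t x $3$3 = Complex (Re (x$3)) (Im (x$1))"
  "Xp t x $3$4 = Complex (- Re (x$4)) (Im (x$2))"
  by (simp_all add: Xp_def Let_def vector_def e_def)

lemma Xp_diff: "Xp t x - Xp t y = Xp t (x - y)"
  by (simp add: vec_eq_iff forall_3 forall_4 Xp_components complex_eq_iff algebra_simps)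

lemma det3_scaled_off_diagonal_blocks:
  "det3 m11 m12 (e*u) m21 m22 (e * v) (e*w) (e*z) c
     = c * (m11*m22 - m12*m21) + e^2 * (m12 * v * w + u*m21*z - u*m22*w - m11 * v * z)"
  by (simp add: det3_def algebra_simps power2_eq_square)

lemma Complex_alamouti_det:
  "Complex a b * Complex a (-b) - Complex (-c) d * Complex c d = Complex (a^2 + b^2 + c^2 + d^2) 0"
  by (simp add: complex_eq_iff power2_eq_square algebra_simps)

lemma rank_Xp_minor_123_affine:
  "\<exists>k. \<forall>t. rank (Xp t d) \<noteq> 3 \<longrightarrow>
     Complex (Re (d$3)) (Im (d$1))
       * Complex ((Re (d$1))^2 + (Im (d$3))^2 + (Re (d$2))^2 + (Im (d$4))^2) 0
     + exp (\<i> * complex_of_real t) ^ 2 * k = 0"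
  using rank_eq_3_if_minor_nonzero[of "Xp t d" 1 2 3 for t]
  unfolding Xp_components det3_scaled_off_diagonal_blocks Complex_alamouti_det by blast

lemma rank_Xp_minor_124_affine:
  "\<exists>k. \<forall>t. rank (Xp t d) \<noteq> 3 \<longrightarrow>
     Complex (- Re (d$4)) (Im (d$2))
       * Complex ((Re (d$1))^2 + (Im (d$3))^2 + (Re (d$2))^2 + (Im (d$4))^2) 0
     + exp (\<i> * complex_of_real t) ^ 2 * k = 0"
  using rank_eq_3_if_minor_nonzero[of "Xp t d" 1 2 4 for t]
  unfolding Xp_components det3_scaled_off_diagonal_blocks Complex_alamouti_det by blast

lemma minor_134_Xp_if_first_four_zero:
  fixes t :: real
  assumes "d$1 = 0" "d$2 = 0" "d$3 = 0" "d$4 = 0"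
  defines "e \<equiv> exp (\<i> * complex_of_real t)"
  shows "det3 (Xp t d$1$1) (Xp t d$1$3) (Xp t d$1$4) (Xp t d$2$1) (Xp t d$2$3) (Xp t d$2$4)
           (Xp t d$3$1) (Xp t d$3$3) (Xp t d$3$4)
         = (e * Complex (Re (d$5)) (Im (d$6))) * (e * Complex (Re (d$5)) (- Im (d$6)))
             * (e * Complex (Re (d$6)) (Im (d$5)))"
proof -
  have "Complex 0 0 = 0" by (simp add: complex_eq_iff)
  with assms(1-4) show ?thesis unfolding Xp_components det3_def e_def by simp
qed

lemma nonzero_cpd_diff_Re_eq_0_iff:
  assumes "nonzero_cpd S" "u \<in> S" "v \<in> S"
  shows "Re (u - v) = 0 \<longleftrightarrow> Im (u - v) = 0"
  using assms by (cases "u = v") (auto simp: nonzero_cpd_def)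

lemma Complex_Re_Im_nonzero:
  assumes "Re z = 0 \<longleftrightarrow> Im z = 0" "Re w = 0 \<longleftrightarrow> Im w = 0" "z \<noteq> 0 \<or> w \<noteq> 0"
  shows "Complex (Re z) (Im w) \<noteq> 0"
  using assms by (auto simp: complex_eq_iff)

locale cpd_difference =
  fixes d :: "complex^6"
  assumes nonzero: "d \<noteq> 0"
    and Re_eq_0_iff: "\<And>i. Re (d$i) = 0 \<longleftrightarrow> Im (d$i) = 0"
begin

definition bad_squares :: "complex set" where
  "bad_squares = (\<lambda>t. exp (\<i> * complex_of_real t) ^ 2) ` {t. rank (Xp t d) \<noteq> 3}"

lemma finite_bad_squares_if_affine_minor:
  assumes "a \<noteq> 0"
    and "\<exists>k. \<forall>t. rank (Xp t d) \<noteq> 3 \<longrightarrow> a + exp (\<i> * complex_of_real t) ^ 2 * k = 0"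
  shows "finite bad_squares"
proof -
  obtain k where "\<And>t. rank (Xp t d) \<noteq> 3 \<Longrightarrow> a + exp (\<i> * complex_of_real t) ^ 2 * k = 0"
    using assms(2) by blast
  then have "bad_squares \<subseteq> {w. a + w * k = 0}"
    by (auto simp: bad_squares_def)
  then show ?thesis
    using finite_roots_affine[OF assms(1)] by (rule finite_subset)
qed

lemma rank_Xp_if_first_four_zero:
  assumes "d$1 = 0" "d$2 = 0" "d$3 = 0" "d$4 = 0"
  shows "rank (Xp t d) = 3"
proof (rule rank_eq_3_if_minor_nonzero[of _ 1 3 4])
  have "d$5 \<noteq> 0 \<or> d$6 \<noteq> 0"
  proof (rule ccontr)
    assume "\<not> (d$5 \<noteq> 0 \<or> d$6 \<noteq> 0)"
    with assms have "\<forall>i. d$i = 0" by (metis exhaust_6)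
    with nonzero show False by (simp add: vec_eq_iff)
  qed
  then have "Complex (Re (d$5)) (Im (d$6)) \<noteq> 0" "Complex (Re (d$5)) (- Im (d$6)) \<noteq> 0"
    "Complex (Re (d$6)) (Im (d$5)) \<noteq> 0"
    using Re_eq_0_iff[of 5] Re_eq_0_iff[of 6] by (auto simp: complex_eq_iff)
  then show "det3 (Xp t d$1$1) (Xp t d$1$3) (Xp t d$1$4) (Xp t d$2$1) (Xp t d$2$3) (Xp t d$2$4)
      (Xp t d$3$1) (Xp t d$3$3) (Xp t d$3$4) \<noteq> 0"
    by (simp add: minor_134_Xp_if_first_four_zero[OF assms])
qed

lemma alamouti_det_nonzero:
  assumes "d$1 \<noteq> 0 \<or> d$2 \<noteq> 0 \<or> d$3 \<noteq> 0 \<or> d$4 \<noteq> 0"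
  shows "Complex ((Re (d$1))^2 + (Im (d$3))^2 + (Re (d$2))^2 + (Im (d$4))^2) 0 \<noteq> 0"
proof -
  have "Re (d$1) \<noteq> 0 \<or> Im (d$3) \<noteq> 0 \<or> Re (d$2) \<noteq> 0 \<or> Im (d$4) \<noteq> 0"
    using assms Re_eq_0_iff[of 1] Re_eq_0_iff[of 2] Re_eq_0_iff[of 3] Re_eq_0_iff[of 4]
    by (auto simp: complex_eq_iff)
  then have "(Re (d$1))^2 + (Im (d$3))^2 + (Re (d$2))^2 + (Im (d$4))^2 > 0"
    by (smt (verit) zero_le_power2 zero_less_power2)
  then show ?thesis by (simp add: complex_eq_iff)
qed

lemma finite_bad_squares: "finite bad_squares"
proof -
  let ?N = "Complex ((Re (d$1))^2 + (Im (d$3))^2 + (Re (d$2))^2 + (Im (d$4))^2) 0"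
  consider "d$1 = 0" "d$2 = 0" "d$3 = 0" "d$4 = 0" | "d$1 \<noteq> 0 \<or> d$3 \<noteq> 0"
    | "d$1 = 0" "d$3 = 0" "d$2 \<noteq> 0 \<or> d$4 \<noteq> 0"
    by blast
  then show ?thesis
  proof cases
    case 1
    then have "bad_squares = {}" by (simp add: bad_squares_def rank_Xp_if_first_four_zero)
    then show ?thesis by simp
  next
    case 2
    have "Complex (Re (d$3)) (Im (d$1)) * ?N \<noteq> 0"
      using 2 alamouti_det_nonzero Complex_Re_Im_nonzero[OF Re_eq_0_iff[of 3] Re_eq_0_iff[of 1]]
      by auto
    then show ?thesis
      using rank_Xp_minor_123_affine by (rule finite_bad_squares_if_affine_minor)
  next
    case 3
    have "Re (- d$4) = 0 \<longleftrightarrow> Im (- d$4) = 0" using Re_eq_0_iff[of 4] by simp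
    from Complex_Re_Im_nonzero[OF this Re_eq_0_iff[of 2]]
    have "Complex (- Re (d$4)) (Im (d$2)) * ?N \<noteq> 0"
      using 3 alamouti_det_nonzero by auto
    then show ?thesis
      using rank_Xp_minor_124_affine by (rule finite_bad_squares_if_affine_minor)
  qed
qed

end

lemma inj_on_exp_i_squared: "inj_on (\<lambda>t. exp (\<i> * complex_of_real t) ^ 2) {0..<pi}"
proof (rule inj_onI)
  fix s t assume s: "s \<in> {0..<pi}" and t: "t \<in> {0..<pi}"
    and "exp (\<i> * complex_of_real s) ^ 2 = exp (\<i> * complex_of_real t) ^ 2"
  then have "exp (of_nat 2 * (\<i> * complex_of_real s)) = exp (of_nat 2 * (\<i> * complex_of_real t))"
    by (simp only: exp_of_nat_mult)
  moreover have "\<bar>Im (of_nat 2 * (\<i> * complex_of_real s)) - Im (of_nat 2 * (\<i> * complex_of_real t))\<bar> < 2 * pi"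
    using s t by (simp add: abs_less_iff)
  ultimately show "s = t"
    using exp_complex_eqI by fastforce
qed

lemma exists_angle_avoiding:
  assumes "finite W"
  shows "\<exists>\<theta>\<in>{0..<pi}. exp (\<i> * complex_of_real \<theta>) ^ 2 \<notin> W"
proof (rule ccontr)
  assume "\<not> ?thesis"
  then have "{0..<pi} \<subseteq> (\<lambda>t. exp (\<i> * complex_of_real t) ^ 2) -` W \<inter> {0..<pi}" by auto
  moreover have "finite ((\<lambda>t. exp (\<i> * complex_of_real t) ^ 2) -` W \<inter> {0..<pi})"
    using assms inj_on_exp_i_squared by (rule finite_vimage_IntI)
  ultimately have "finite {0..<pi}" by (rule finite_subset)
  moreover have "infinite {0..<pi}" by (rule infinite_Ico) simp
  ultimately show False by contradiction
qed

theorem lemma1: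
  fixes L :: nat and S :: "nat \<Rightarrow> complex set"
  assumes "\<forall>l\<in>{1..L}. finite (S l) \<and> nonzero_cpd (S l)"
  shows "\<exists>\<theta>\<in>{0..2*pi}. \<forall>l\<in>{1..L}. \<forall>x y :: complex^6.
           (\<forall>i. x$i \<in> S l) \<and> (\<forall>i. y$i \<in> S l) \<and> x \<noteq> y \<longrightarrow>
           rank (Xp \<theta> x - Xp \<theta> y) = 3"
proof -
  define F where "F l = {x :: complex^6. \<forall>i. x$i \<in> S l}" for l
  have diff: "cpd_difference (x - y)" if "l \<in> {1..L}" "x \<in> F l" "y \<in> F l" "x \<noteq> y" for l x y
    using that assms nonzero_cpd_diff_Re_eq_0_iff[of "S l" "x$i" "y$i" for i]
    by unfold_locales (auto simp: F_def)
  define W where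
    "W = (\<Union>l\<in>{1..L}. \<Union>x\<in>F l. \<Union>y\<in>F l - {x}. cpd_difference.bad_squares (x - y))"
  have "finite (F l)" if "l \<in> {1..L}" for l
    using assms that by (simp add: F_def finite_vectors_with_components_in)
  then have "finite W"
    unfolding W_def by (auto intro!: finite_UN_I cpd_difference.finite_bad_squares diff)
  then obtain \<theta> where \<theta>: "\<theta> \<in> {0..<pi}" "exp (\<i> * complex_of_real \<theta>) ^ 2 \<notin> W"
    using exists_angle_avoiding by blast
  have "rank (Xp \<theta> (x - y)) = 3" if "l \<in> {1..L}" "x \<in> F l" "y \<in> F l" "x \<noteq> y" for l x y
  proof (rule ccontr)
    assume "rank (Xp \<theta> (x - y)) \<noteq> 3"
    then have "exp (\<i> * complex_of_real \<theta>) ^ 2 \<in> cpd_difference.bad_squares (x - y)"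
      unfolding cpd_difference.bad_squares_def[OF diff[OF that]] by blast
    with that \<theta>(2) show False unfolding W_def by blast
  qed
  moreover have "\<theta> \<in> {0..2*pi}" using \<theta>(1) by simp
  ultimately show ?thesis by (intro bexI[of _ \<theta>]) (auto simp: F_def Xp_diff)
qed

end
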